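(* Let $G$ be an abelian group. Fix an imaginary unit $\hat I\in\mathbb{H}$ and identify the circle group $\mathbb{T}$ with the unit circle of $\mathbb{C}_{\hat I}$, so that $\widehat G=\mathrm{Hom}(G,\mathbb{T})\subseteq G^\delta$. The following are equivalent: (i) $\widehat G=G^\delta$; (ii) every $\phi\in\mathcal{P}^{\mathbb{H}}_*(G)$ is real-valued; (iii) $G$ has exponent $\le 2$, i.e. $2g=0$ for all $g\in G$.
   Context: $\mathbb{H}$ is the real quaternion algebra, $\mathbb{S}=\{q\in\mathbb{H}:|q|=1\}$. An imaginary unit is $I\in\mathbb{H}$ with $\mathrm{Re}\,I=0$, $|I|=1$; $\mathbb{C}_I=\mathbb{R}\oplus I\mathbb{R}$. For an abelian group $G$, $\phi:G\to\mathbb{H}$ is positive definite if for all $k$, $g_i\in G$, $q_i\in\mathbb{H}$, $\sum_{i,j=1}^k\overline{q_i}\,\phi(g_j-g_i)\,q_j$ is a nonnegative real number; $\mathcal{P}^{\mathbb{H}}_*(G)$ is the set of such $\phi$ with $\phi(0)=1$. $G^\delta=\mathrm{Hom}(G,\mathbb{S})$. *)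

theory Defs
  imports Complex_Main
begin

datatype quat = Quat (qre: real) (qim_i: real) (qim_j: real) (qim_k: real)

definition qof_real :: "real \<Rightarrow> quat" where
  "qof_real r = Quat r 0 0 0"

definition qadd :: "quat \<Rightarrow> quat \<Rightarrow> quat" where
  "qadd p q = Quat (qre p + qre q) (qim_i p + qim_i q) (qim_j p + qim_j q) (qim_k p + qim_k q)"

definition qmul :: "quat \<Rightarrow> quat \<Rightarrow> quat" where
  "qmul p q = Quat
     (qre p * qre q - qim_i p * qim_i q - qim_j p * qim_j q - qim_k p * qim_k q)
     (qre p * qim_i q + qim_i p * qre q + qim_j p * qim_k q - qim_k p * qim_j q)
     (qre p * qim_j q - qim_i p * qim_k q + qim_j p * qre q + qim_k p * qim_i q)
     (qre p * qim_k q + qim_i p * qim_j q - qim_j p * qim_i q + qim_k p * qre q)"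

definition qcnj :: "quat \<Rightarrow> quat" where
  "qcnj q = Quat (qre q) (- qim_i q) (- qim_j q) (- qim_k q)"

definition qnorm :: "quat \<Rightarrow> real" where
  "qnorm q = sqrt ((qre q)\<^sup>2 + (qim_i q)\<^sup>2 + (qim_j q)\<^sup>2 + (qim_k q)\<^sup>2)"

definition qsum :: "('b \<Rightarrow> quat) \<Rightarrow> 'b set \<Rightarrow> quat" where
  "qsum f A = Quat (\<Sum>x\<in>A. qre (f x)) (\<Sum>x\<in>A. qim_i (f x)) (\<Sum>x\<in>A. qim_j (f x)) (\<Sum>x\<in>A. qim_k (f x))"

definition qis_real :: "quat \<Rightarrow> bool" where
  "qis_real q \<longleftrightarrow> q \<in> range qof_real"

definition qsphere :: "quat set" where
  "qsphere = {q. qnorm q = 1}"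

definition imag_unit :: "quat \<Rightarrow> bool" where
  "imag_unit I \<longleftrightarrow> qre I = 0 \<and> qnorm I = 1"

definition slice :: "quat \<Rightarrow> quat set" where
  "slice I = {qadd (qof_real a) (qmul I (qof_real b)) | a b. True}"

definition pos_def_H :: "('a::ab_group_add \<Rightarrow> quat) \<Rightarrow> bool" where
  "pos_def_H \<phi> \<longleftrightarrow> (\<forall>(k::nat) (g::nat \<Rightarrow> 'a) (q::nat \<Rightarrow> quat).
     (let s = qsum (\<lambda>(i, j). qmul (qmul (qcnj (q i)) (\<phi> (g j - g i))) (q j)) ({1..k} \<times> {1..k})
      in qis_real s \<and> qre s \<ge> 0))"

definition PH_star :: "('a::ab_group_add \<Rightarrow> quat) set" where
  "PH_star = {\<phi>. pos_def_H \<phi> \<and> \<phi> 0 = qof_real 1}"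

definition Gdelta :: "('a::ab_group_add \<Rightarrow> quat) set" where
  "Gdelta = {\<chi>. (\<forall>g. \<chi> g \<in> qsphere) \<and> (\<forall>g h. \<chi> (g + h) = qmul (\<chi> g) (\<chi> h))}"

definition Ghat :: "quat \<Rightarrow> ('a::ab_group_add \<Rightarrow> quat) set" where
  "Ghat I = {\<chi>. (\<forall>g. \<chi> g \<in> qsphere \<inter> slice I) \<and> (\<forall>g h. \<chi> (g + h) = qmul (\<chi> g) (\<chi> h))}"

end

theory Submission
  imports Defs
begin

text \<open>If \<open>2g = 0\<close> for all \<open>g\<close>, every character squares to \<open>1\<close> and so takes only the values
  \<open>\<plusminus>1\<close>, whence \<open>G\<^sup>\<delta> = \<widehat>G\<close>; and a positive definite \<open>\<phi>\<close> with \<open>\<phi>(-g) = \<phi>(g)\<close> is real,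
  because testing positivity on the points \<open>0, g\<close> with weights \<open>1, e\<close> for the units
  \<open>e = i, j\<close> forces the imaginary part of \<open>\<phi>(g)\<close> to vanish.
  Conversely, if \<open>2g \<noteq> 0\<close> there is a circle-valued character \<open>\<psi>\<close> of \<open>G\<close> with \<open>\<psi>(g) \<notin> \<real>\<close>:
  prescribe \<open>\<psi>\<close> on the cyclic group generated by \<open>g\<close> and extend it by Zorn's lemma, using
  divisibility of the circle group.  Composing \<open>\<psi>\<close> with an embedding of \<open>\<complex>\<close> into \<open>\<bbbH>\<close> along
  an imaginary unit \<open>J \<notin> \<complex>\<^sub>I\<close> gives an element of \<open>G\<^sup>\<delta>\<close> outside \<open>\<widehat>G\<close>, and every
  element of \<open>G\<^sup>\<delta>\<close> is positive definite, which contradicts both (i) and (ii).\<close>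

section \<open>Quaternion arithmetic\<close>

instantiation quat :: ring_1
begin
definition "0 = Quat 0 0 0 0"
definition "1 = Quat 1 0 0 0"
definition "p + q = qadd p q"
definition "- q = Quat (- qre q) (- qim_i q) (- qim_j q) (- qim_k q)"
definition "p - q = p + (- (q::quat))"
definition "p * q = qmul p q"
instance
  by standard (auto simp: zero_quat_def one_quat_def plus_quat_def uminus_quat_def
     minus_quat_def times_quat_def qadd_def qmul_def algebra_simps intro: quat.expand)
end

lemma quat_components [simp]:
  "qre 0 = 0" "qim_i 0 = 0" "qim_j 0 = 0" "qim_k 0 = 0"
  "qre 1 = 1" "qim_i 1 = 0" "qim_j 1 = 0" "qim_k 1 = 0"
  "qre (p + q) = qre p + qre q" "qim_i (p + q) = qim_i p + qim_i q"
  "qim_j (p + q) = qim_j p + qim_j q" "qim_k (p + q) = qim_k p + qim_k q"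
  "qre (p * q) = qre p * qre q - qim_i p * qim_i q - qim_j p * qim_j q - qim_k p * qim_k q"
  "qim_i (p * q) = qre p * qim_i q + qim_i p * qre q + qim_j p * qim_k q - qim_k p * qim_j q"
  "qim_j (p * q) = qre p * qim_j q - qim_i p * qim_k q + qim_j p * qre q + qim_k p * qim_i q"
  "qim_k (p * q) = qre p * qim_k q + qim_i p * qim_j q - qim_j p * qim_i q + qim_k p * qre q"
  by (simp_all add: zero_quat_def one_quat_def plus_quat_def times_quat_def qadd_def qmul_def)

lemma qadd_eq_plus: "qadd p q = p + q"
  by (simp add: plus_quat_def)

lemma qmul_eq_times: "qmul p q = p * q"
  by (simp add: times_quat_def)

lemma qof_real_one: "qof_real 1 = 1"
  by (simp add: qof_real_def one_quat_def)

lemma quat_sum_components: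
  "qre (sum f A) = (\<Sum>x\<in>A. qre (f x))" "qim_i (sum f A) = (\<Sum>x\<in>A. qim_i (f x))"
  "qim_j (sum f A) = (\<Sum>x\<in>A. qim_j (f x))" "qim_k (sum f A) = (\<Sum>x\<in>A. qim_k (f x))"
  by (induction A rule: infinite_finite_induct; simp)+

lemma qsum_eq_sum: "qsum f A = sum f A"
  unfolding qsum_def by (rule quat.expand) (simp add: quat_sum_components)

lemma qis_real_iff: "qis_real q \<longleftrightarrow> qim_i q = 0 \<and> qim_j q = 0 \<and> qim_k q = 0"
  unfolding qis_real_def qof_real_def by (cases q) (auto simp: image_def)

lemma qcnj_add: "qcnj (p + q) = qcnj p + qcnj q"
  by (rule quat.expand) (simp add: qcnj_def)

lemma qcnj_mult: "qcnj (p * q) = qcnj q * qcnj p"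
  by (rule quat.expand) (simp add: qcnj_def algebra_simps)

lemma qcnj_sum: "qcnj (sum f A) = (\<Sum>x\<in>A. qcnj (f x))"
  by (induction A rule: infinite_finite_induct)
    (simp_all add: qcnj_add, simp_all add: qcnj_def zero_quat_def)

definition qnormsq :: "quat \<Rightarrow> real" where
  "qnormsq q = (qre q)\<^sup>2 + (qim_i q)\<^sup>2 + (qim_j q)\<^sup>2 + (qim_k q)\<^sup>2"

lemma qcnj_mult_self: "qcnj q * q = qof_real (qnormsq q)"
  by (rule quat.expand) (simp add: qcnj_def qof_real_def qnormsq_def power2_eq_square)

lemma qnorm_eq_1_iff: "qnorm q = 1 \<longleftrightarrow> qnormsq q = 1"
  by (simp add: qnorm_def qnormsq_def)

lemma quat_square_eq_1_imp_real:
  assumes "x * x = (1::quat)"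
  shows "x = qof_real (qre x)"
proof -
  have e: "qre x * qre x - qim_i x * qim_i x - qim_j x * qim_j x - qim_k x * qim_k x = 1"
    "2 * qre x * qim_i x = 0" "2 * qre x * qim_j x = 0" "2 * qre x * qim_k x = 0"
    using arg_cong[OF assms, of qre] arg_cong[OF assms, of qim_i] arg_cong[OF assms, of qim_j]
       arg_cong[OF assms, of qim_k] by (simp_all add: algebra_simps)
  have "qre x \<noteq> 0"
  proof
    assume "qre x = 0"
    with e(1) have "- (qim_i x * qim_i x + qim_j x * qim_j x + qim_k x * qim_k x) = 1" by simp
    moreover have "qim_i x * qim_i x + qim_j x * qim_j x + qim_k x * qim_k x \<ge> 0" by simp
    ultimately show False by linarith
  qed
  with e show ?thesis by (cases x) (simp add: qof_real_def)
qed

section \<open>Characters into the unit quaternions\<close>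

lemma Gdelta_qnormsq: "\<chi> \<in> Gdelta \<Longrightarrow> qnormsq (\<chi> x) = 1"
  by (auto simp: Gdelta_def qsphere_def qnorm_eq_1_iff)

lemma Gdelta_add: "\<chi> \<in> Gdelta \<Longrightarrow> \<chi> (x + y) = \<chi> x * \<chi> y"
  by (auto simp: Gdelta_def qmul_eq_times)

lemma Gdelta_zero:
  assumes "\<chi> \<in> Gdelta"
  shows "\<chi> 0 = 1"
proof -
  have "\<chi> 0 = \<chi> 0 * \<chi> 0" using Gdelta_add[OF assms, of 0 0] by simp
  hence "qcnj (\<chi> 0) * \<chi> 0 = qcnj (\<chi> 0) * \<chi> 0 * \<chi> 0" by (simp add: mult.assoc)
  thus ?thesis using qcnj_mult_self[of "\<chi> 0"] Gdelta_qnormsq[OF assms] by (simp add: qof_real_one)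
qed

lemma Gdelta_uminus:
  assumes "\<chi> \<in> Gdelta"
  shows "\<chi> (- x) = qcnj (\<chi> x)"
proof -
  have "\<chi> x * \<chi> (- x) = 1" using Gdelta_add[OF assms, of x "- x"] Gdelta_zero[OF assms] by simp
  hence "qcnj (\<chi> x) * (\<chi> x * \<chi> (- x)) = qcnj (\<chi> x)" by simp
  thus ?thesis using qcnj_mult_self[of "\<chi> x"] Gdelta_qnormsq[OF assms]
    by (simp add: qof_real_one mult.assoc[symmetric])
qed

text \<open>With \<open>u\<^sub>j = \<chi>(g\<^sub>j) q\<^sub>j\<close> the defining sum of positive definiteness is \<open>|\<Sum>\<^sub>j u\<^sub>j|\<^sup>2\<close>.\<close>
lemma Gdelta_subset_PH_star: "Gdelta \<subseteq> PH_star"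
proof
  fix \<chi> :: "'a \<Rightarrow> quat" assume \<chi>: "\<chi> \<in> Gdelta"
  have "pos_def_H \<chi>"
    unfolding pos_def_H_def Let_def
  proof (intro allI)
    fix k :: nat and g :: "nat \<Rightarrow> 'a" and q :: "nat \<Rightarrow> quat"
    define u where "u j = \<chi> (g j) * q j" for j
    have term_eq: "qmul (qmul (qcnj (q i)) (\<chi> (g j - g i))) (q j) = qcnj (u i) * u j" for i j
    proof -
      have "\<chi> (g j - g i) = qcnj (\<chi> (g i)) * \<chi> (g j)"
        using Gdelta_add[OF \<chi>, of "- g i" "g j"] Gdelta_uminus[OF \<chi>, of "g i"]
        by (simp add: add.commute)
      thus ?thesis by (simp add: u_def qmul_eq_times qcnj_mult mult.assoc)
    qed
    have "qsum (\<lambda>(i, j). qmul (qmul (qcnj (q i)) (\<chi> (g j - g i))) (q j)) ({1..k} \<times> {1..k})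
        = (\<Sum>i\<in>{1..k}. \<Sum>j\<in>{1..k}. qcnj (u i) * u j)"
      by (simp add: qsum_eq_sum term_eq sum.cartesian_product)
    also have "\<dots> = qcnj (sum u {1..k}) * sum u {1..k}"
      by (simp add: qcnj_sum sum_product)
    also have "\<dots> = qof_real (qnormsq (sum u {1..k}))"
      by (rule qcnj_mult_self)
    finally show "qis_real (qsum (\<lambda>(i, j). qmul (qmul (qcnj (q i)) (\<chi> (g j - g i))) (q j)) ({1..k} \<times> {1..k})) \<and>
       0 \<le> qre (qsum (\<lambda>(i, j). qmul (qmul (qcnj (q i)) (\<chi> (g j - g i))) (q j)) ({1..k} \<times> {1..k}))"
      by (simp add: qis_real_def qof_real_def qnormsq_def)
  qed
  thus "\<chi> \<in> PH_star" using Gdelta_zero[OF \<chi>] by (simp add: PH_star_def qof_real_one)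
qed

lemma pos_def_H_real_at_involution:
  assumes "pos_def_H \<phi>" "\<phi> 0 = qof_real 1" "(g::'a::ab_group_add) + g = 0"
  shows "qis_real (\<phi> g)"
proof -
  have neg_g: "- g = g" using assms(3) by (simp add: add_eq_0_iff)
  let ?pts = "\<lambda>n::nat. if n = 1 then 0 else g"
  have pos: "qis_real (qsum (\<lambda>(i, j). qmul (qmul (qcnj (q i)) (\<phi> (?pts j - ?pts i))) (q j))
      ({1..2} \<times> {1..2}))" for q
    using assms(1) unfolding pos_def_H_def Let_def by (elim allE[of _ 2] allE[of _ ?pts]) blast
  have "{1..2::nat} \<times> {1..2::nat} = {(1,1),(1,2),(2,1),(2,2)}" by auto
  hence "qis_real (qcnj 1 * 1 + qcnj 1 * \<phi> g * e + qcnj e * \<phi> g * 1 + qcnj e * e)" for e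
    using pos[of "\<lambda>n. if n = 1 then 1 else e"] assms(2)
    by (simp add: qsum_eq_sum qmul_eq_times neg_g qof_real_one add_ac)
  from this[of "Quat 0 1 0 0"] this[of "Quat 0 0 1 0"] show ?thesis
    by (simp add: qis_real_iff qcnj_def)
qed

lemma Ghat_eq_Gdelta_if_exponent_two:
  assumes "\<forall>g::'a::ab_group_add. g + g = 0"
  shows "(Ghat I :: ('a \<Rightarrow> quat) set) = Gdelta"
proof
  show "Ghat I \<subseteq> Gdelta" by (auto simp: Ghat_def Gdelta_def)
  show "Gdelta \<subseteq> (Ghat I :: ('a \<Rightarrow> quat) set)"
  proof
    fix \<chi> :: "'a \<Rightarrow> quat" assume \<chi>: "\<chi> \<in> Gdelta"
    have "\<chi> g \<in> slice I" for g
    proof -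
      have "\<chi> g * \<chi> g = 1" using Gdelta_add[OF \<chi>, of g g] Gdelta_zero[OF \<chi>] assms by simp
      hence "\<chi> g = qof_real (qre (\<chi> g))" by (rule quat_square_eq_1_imp_real)
      hence "\<chi> g = qadd (qof_real (qre (\<chi> g))) (qmul I (qof_real 0))"
        by (simp add: qadd_eq_plus qmul_eq_times) (simp add: qof_real_def zero_quat_def[symmetric])
      thus ?thesis unfolding slice_def by blast
    qed
    thus "\<chi> \<in> Ghat I" using \<chi> by (auto simp: Ghat_def Gdelta_def)
  qed
qed

section \<open>Extending circle-valued characters\<close>

primrec natmul :: "nat \<Rightarrow> 'a::ab_group_add \<Rightarrow> 'a" where
  "natmul 0 x = 0"
| "natmul (Suc n) x = x + natmul n x"

lemma natmul_add: "natmul (m + n) x = natmul m x + natmul n x"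
  by (induction m) (simp_all add: add.assoc)

lemma natmul_mult: "natmul (m * n) x = natmul m (natmul n x)"
  by (induction m) (simp_all add: natmul_add)

lemma natmul_zero [simp]: "natmul n 0 = (0::'a::ab_group_add)"
  by (induction n) simp_all

lemma natmul_diff: "q \<le> p \<Longrightarrow> natmul p x - natmul q x = natmul (p - q) x"
  using natmul_add[of "p - q" q x] by simp

lemma natmul_mod_div: "natmul n x = natmul (n mod N) x + natmul (n div N) (natmul N x)"
proof -
  have "natmul n x = natmul (n mod N + n div N * N) x" by (simp only: mod_div_mult_eq)
  thus ?thesis by (simp only: natmul_add natmul_mult)
qed

text \<open>Graph of a circle-valued character on a subgroup of \<open>G\<close> (the domain of \<open>R\<close>).\<close>
definition partial_char :: "('a::ab_group_add \<times> complex) set \<Rightarrow> bool" where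
  "partial_char R \<longleftrightarrow> (0, 1) \<in> R
     \<and> (\<forall>x a y b. (x, a) \<in> R \<longrightarrow> (y, b) \<in> R \<longrightarrow> (x - y, a / b) \<in> R)
     \<and> (\<forall>x a b. (x, a) \<in> R \<longrightarrow> (x, b) \<in> R \<longrightarrow> a = b)
     \<and> (\<forall>x a. (x, a) \<in> R \<longrightarrow> cmod a = 1)"

lemma partial_charD:
  assumes "partial_char R"
  shows "(0, 1) \<in> R" "(x, a) \<in> R \<Longrightarrow> (y, b) \<in> R \<Longrightarrow> (x - y, a / b) \<in> R"
    "(x, a) \<in> R \<Longrightarrow> (x, b) \<in> R \<Longrightarrow> a = b" "(x, a) \<in> R \<Longrightarrow> cmod a = 1"
  using assms unfolding partial_char_def by blast+

lemma partial_char_uminus: "partial_char R \<Longrightarrow> (x, a) \<in> R \<Longrightarrow> (- x, 1 / a) \<in> R"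
  using partial_charD(2)[of R 0 1 x a] partial_charD(1)[of R] by simp

lemma partial_char_add:
  "partial_char R \<Longrightarrow> (x, a) \<in> R \<Longrightarrow> (y, b) \<in> R \<Longrightarrow> (x + y, a * b) \<in> R"
  using partial_charD(2)[of R x a "- y" "1 / b"] partial_char_uminus[of R y b] by simp

lemma partial_char_nonzero: "partial_char R \<Longrightarrow> (x, a) \<in> R \<Longrightarrow> a \<noteq> 0"
  using partial_charD(4) by fastforce

lemma partial_char_natmul: "partial_char R \<Longrightarrow> (x, a) \<in> R \<Longrightarrow> (natmul n x, a ^ n) \<in> R"
  by (induction n) (simp_all add: partial_charD(1) partial_char_add)

lemma partial_char_single: "partial_char {(0::'a::ab_group_add, 1::complex)}"
  unfolding partial_char_def by auto

lemma partial_char_Union_chain: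
  assumes "C \<noteq> {}" "chain\<^sub>\<subseteq> C" "\<And>R. R \<in> C \<Longrightarrow> partial_char R"
  shows "partial_char (\<Union>C)"
proof -
  have in_one: "\<exists>R\<in>C. p \<in> R \<and> q \<in> R" if "p \<in> \<Union>C" "q \<in> \<Union>C" for p q
    using that assms(2) unfolding chain_subset_def by blast
  show ?thesis
    unfolding partial_char_def
  proof (intro conjI allI impI)
    show "(0, 1) \<in> \<Union>C" using assms(1,3) partial_charD(1) by blast
  next
    fix x a y b assume "(x, a) \<in> \<Union>C" "(y, b) \<in> \<Union>C"
    with in_one obtain R where "R \<in> C" "(x, a) \<in> R" "(y, b) \<in> R" by blast
    thus "(x - y, a / b) \<in> \<Union>C" using assms(3) partial_charD(2) by blast
  next
    fix x a b assume "(x, a) \<in> \<Union>C" "(x, b) \<in> \<Union>C"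
    with in_one obtain R where "R \<in> C" "(x, a) \<in> R" "(x, b) \<in> R" by blast
    thus "a = b" using assms(3) partial_charD(3) by blast
  next
    fix x a assume "(x, a) \<in> \<Union>C"
    thus "cmod a = 1" using assms(3) partial_charD(4) by blast
  qed
qed

definition admissible :: "('a::ab_group_add \<times> complex) set \<Rightarrow> 'a \<Rightarrow> complex \<Rightarrow> bool" where
  "admissible R x w \<longleftrightarrow> cmod w = 1 \<and> (\<forall>n c. (natmul n x, c) \<in> R \<longrightarrow> c = w ^ n)"

definition adjoin :: "('a::ab_group_add \<times> complex) set \<Rightarrow> 'a \<Rightarrow> complex \<Rightarrow> ('a \<times> complex) set" where
  "adjoin R x w = {(h + natmul n x - natmul m x, a * w ^ n / w ^ m) | h a n m. (h, a) \<in> R}"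

lemma admissible_natmul_diff:
  assumes R: "partial_char R" and w: "admissible R x w"
    and c: "(natmul p x - natmul q x, c) \<in> R"
  shows "c = w ^ p / w ^ q"
proof -
  have w0: "w \<noteq> 0" using w by (auto simp: admissible_def)
  show ?thesis
  proof (cases "q \<le> p")
    case True
    then have "c = w ^ (p - q)" using c w by (simp add: natmul_diff admissible_def)
    thus ?thesis using power_diff[OF w0 True] by simp
  next
    case False
    have "natmul p x - natmul q x = - natmul (q - p) x"
      using False natmul_diff[of p q x] by (metis minus_diff_eq nat_le_linear)
    hence "(natmul (q - p) x, 1 / c) \<in> R" using partial_char_uminus[OF R c] by simp
    hence "1 / c = w ^ (q - p)" using w by (simp add: admissible_def)
    moreover have "w ^ q = w ^ p * w ^ (q - p)" using False by (simp add: power_add[symmetric])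
    ultimately show ?thesis using w0 partial_char_nonzero[OF R c] by (auto simp: divide_simps mult.commute)
  qed
qed

lemma partial_char_adjoin:
  assumes R: "partial_char R" and w: "admissible R x w"
  shows "partial_char (adjoin R x w)" "R \<subseteq> adjoin R x w" "(x, w) \<in> adjoin R x w"
proof -
  have w0: "w \<noteq> 0" and w1: "cmod w = 1" using w by (auto simp: admissible_def)
  show "R \<subseteq> adjoin R x w"
  proof
    fix p assume "p \<in> R"
    thus "p \<in> adjoin R x w" unfolding adjoin_def
      by (cases p) (intro CollectI exI[of _ "fst p"] exI[of _ "snd p"] exI[of _ 0] exI[of _ 0], simp)
  qed
  show "(x, w) \<in> adjoin R x w" unfolding adjoin_def
    using partial_charD(1)[OF R] by (intro CollectI exI[of _ 0] exI[of _ 1] exI[of _ 1] exI[of _ 0]) simp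
  show "partial_char (adjoin R x w)"
    unfolding partial_char_def
  proof (intro conjI allI impI)
    show "(0, 1) \<in> adjoin R x w" unfolding adjoin_def
      using partial_charD(1)[OF R] by (intro CollectI exI[of _ 0] exI[of _ 1] exI[of _ 0] exI[of _ 0]) simp
  next
    fix y a z b assume "(y, a) \<in> adjoin R x w" "(z, b) \<in> adjoin R x w"
    then obtain h1 a1 n1 m1 h2 a2 n2 m2 where
      1: "y = h1 + natmul n1 x - natmul m1 x" "a = a1 * w ^ n1 / w ^ m1" "(h1, a1) \<in> R" and
      2: "z = h2 + natmul n2 x - natmul m2 x" "b = a2 * w ^ n2 / w ^ m2" "(h2, a2) \<in> R"
      unfolding adjoin_def by blast
    have a2: "a2 \<noteq> 0" using partial_char_nonzero[OF R 2(3)] .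
    have "y - z = (h1 - h2) + natmul (n1 + m2) x - natmul (m1 + n2) x"
      by (simp only: 1(1) 2(1) natmul_add) (simp add: algebra_simps)
    moreover have "a / b = (a1 / a2) * w ^ (n1 + m2) / w ^ (m1 + n2)"
      unfolding 1(2) 2(2) using w0 a2 by (simp add: power_add field_simps)
    moreover have "(h1 - h2, a1 / a2) \<in> R" using partial_charD(2)[OF R 1(3) 2(3)] .
    ultimately show "(y - z, a / b) \<in> adjoin R x w" unfolding adjoin_def by blast
  next
    fix y a b assume "(y, a) \<in> adjoin R x w" "(y, b) \<in> adjoin R x w"
    then obtain h1 a1 n1 m1 h2 a2 n2 m2 where
      1: "y = h1 + natmul n1 x - natmul m1 x" "a = a1 * w ^ n1 / w ^ m1" "(h1, a1) \<in> R" and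
      2: "y = h2 + natmul n2 x - natmul m2 x" "b = a2 * w ^ n2 / w ^ m2" "(h2, a2) \<in> R"
      unfolding adjoin_def by blast
    have a2: "a2 \<noteq> 0" using partial_char_nonzero[OF R 2(3)] .
    have "h1 - h2 = natmul (n2 + m1) x - natmul (n1 + m2) x"
      using 1(1) 2(1) unfolding natmul_add by (simp add: algebra_simps eq_diff_eq diff_eq_eq)
    hence "(natmul (n2 + m1) x - natmul (n1 + m2) x, a1 / a2) \<in> R"
      using partial_charD(2)[OF R 1(3) 2(3)] by simp
    hence "a1 / a2 = w ^ (n2 + m1) / w ^ (n1 + m2)" by (rule admissible_natmul_diff[OF R w])
    thus "a = b" unfolding 1(2) 2(2) using w0 a2 by (simp add: power_add field_simps)
  next
    fix y a assume "(y, a) \<in> adjoin R x w"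
    then obtain h1 a1 n1 m1 where "a = a1 * w ^ n1 / w ^ m1" "(h1, a1) \<in> R"
      unfolding adjoin_def by blast
    thus "cmod a = 1" using partial_charD(4)[OF R] w1 by (simp add: norm_mult norm_divide norm_power)
  qed
qed

lemma circle_root_exists:
  assumes "cmod c = 1" "N > 0"
  shows "\<exists>w. cmod w = 1 \<and> w ^ N = c"
proof -
  have "sgn c = c" using assms(1) by (simp add: sgn_eq)
  hence "c = cis (Arg c)" by (metis assms(1) cis_Arg norm_zero zero_neq_one)
  moreover have "cis (Arg c / N) ^ N = cis (Arg c)" using assms(2) by (simp add: DeMoivre)
  ultimately show ?thesis by (intro exI[of _ "cis (Arg c / N)"]) simp
qed

text \<open>If some positive multiple of \<open>x\<close> lies in the domain of \<open>R\<close>, take an \<open>N\<close>-th root of the value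
  at the least such multiple \<open>N x\<close>; this is where divisibility of the circle group enters.\<close>
lemma admissible_exists:
  assumes R: "partial_char R"
  shows "\<exists>w. admissible R x w"
proof (cases "\<exists>n c. n > 0 \<and> (natmul n x, c) \<in> R")
  case False
  have "admissible R x 1" unfolding admissible_def
  proof (intro conjI allI impI)
    fix n c assume nc: "(natmul n x, c) \<in> R"
    with False have "n = 0" by (metis gr0I)
    with nc have "(0, c) \<in> R" by simp
    from partial_charD(3)[OF R this partial_charD(1)[OF R]] show "c = 1 ^ n" by simp
  qed simp
  thus ?thesis by blast
next
  case True
  define N where "N = (LEAST n. n > 0 \<and> (\<exists>c. (natmul n x, c) \<in> R))"
  have N: "N > 0 \<and> (\<exists>c. (natmul N x, c) \<in> R)"
    unfolding N_def by (rule LeastI_ex) (use True in blast)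
  then obtain cN where cN: "(natmul N x, cN) \<in> R" by blast
  obtain w where w: "cmod w = 1" "w ^ N = cN"
    using circle_root_exists[of cN N] partial_charD(4)[OF R cN] N by blast
  have "admissible R x w" unfolding admissible_def
  proof (intro conjI allI impI)
    fix n c assume nc: "(natmul n x, c) \<in> R"
    have q: "(natmul (n div N) (natmul N x), cN ^ (n div N)) \<in> R"
      by (rule partial_char_natmul[OF R cN])
    have "natmul (n mod N) x = natmul n x - natmul (n div N) (natmul N x)"
      using natmul_mod_div[of n x N] by (simp add: algebra_simps)
    hence r: "(natmul (n mod N) x, c / cN ^ (n div N)) \<in> R" using partial_charD(2)[OF R nc q] by simp
    have "n mod N = 0"
    proof (rule ccontr)
      assume "n mod N \<noteq> 0"
      hence "0 < n mod N \<and> (\<exists>c. (natmul (n mod N) x, c) \<in> R)" using r by auto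
      hence "N \<le> n mod N" unfolding N_def by (rule Least_le)
      thus False using N mod_less_divisor[of N n] by linarith
    qed
    hence "natmul n x = natmul (n div N) (natmul N x)" using natmul_mod_div[of n x N] by simp
    hence "c = cN ^ (n div N)" using nc q partial_charD(3)[OF R, of "natmul n x" c] by simp
    also have "\<dots> = w ^ (N * (n div N))" by (simp add: w(2)[symmetric] power_mult)
    also have "N * (n div N) = n" using mult_div_mod_eq[of N n] \<open>n mod N = 0\<close> by simp
    finally show "c = w ^ n" .
  qed (use w in simp)
  thus ?thesis by blast
qed

lemma partial_char_extends:
  assumes R: "partial_char R"
  obtains \<psi> :: "'a::ab_group_add \<Rightarrow> complex"
  where "\<And>x. cmod (\<psi> x) = 1" "\<And>x y. \<psi> (x + y) = \<psi> x * \<psi> y" "\<And>x a. (x, a) \<in> R \<Longrightarrow> \<psi> x = a"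
proof -
  define A where "A = {S. partial_char S \<and> R \<subseteq> S}"
  have "\<exists>M\<in>A. \<forall>S\<in>A. M \<subseteq> S \<longrightarrow> S = M"
  proof (rule subset_Zorn_nonempty)
    show "A \<noteq> {}" using R by (auto simp: A_def)
  next
    fix C assume "C \<noteq> {}" "subset.chain A C"
    hence "C \<subseteq> A" "chain\<^sub>\<subseteq> C" by (auto simp: subset_chain_def chain_subset_def)
    with \<open>C \<noteq> {}\<close> show "\<Union>C \<in> A"
      using partial_char_Union_chain[of C] by (auto simp: A_def)
  qed
  then obtain M where M: "partial_char M" "R \<subseteq> M" and max: "\<And>S. S \<in> A \<Longrightarrow> M \<subseteq> S \<Longrightarrow> S = M"
    by (auto simp: A_def)
  have total: "\<exists>a. (y, a) \<in> M" for y
  proof -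
    obtain w where w: "admissible M y w" using admissible_exists[OF M(1)] by blast
    have "adjoin M y w \<in> A" using partial_char_adjoin[OF M(1) w] M(2) by (auto simp: A_def)
    hence "adjoin M y w = M" using max partial_char_adjoin(2)[OF M(1) w] by blast
    thus ?thesis using partial_char_adjoin(3)[OF M(1) w] by auto
  qed
  define \<psi> where "\<psi> y = (THE a. (y, a) \<in> M)" for y
  have \<psi>_eq: "\<psi> y = a" if "(y, a) \<in> M" for y a
    unfolding \<psi>_def using that partial_charD(3)[OF M(1)] by blast
  have \<psi>_in: "(y, \<psi> y) \<in> M" for y
    using total[of y] \<psi>_eq by blast
  show thesis
  proof
    show "cmod (\<psi> x) = 1" for x using partial_charD(4)[OF M(1) \<psi>_in] .
    show "\<psi> (x + y) = \<psi> x * \<psi> y" for x y using \<psi>_eq[OF partial_char_add[OF M(1) \<psi>_in \<psi>_in]] .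
    show "\<psi> x = a" if "(x, a) \<in> R" for x a using \<psi>_eq that M(2) by blast
  qed
qed

text \<open>If \<open>g\<close> has infinite order send it to \<open>\<i>\<close>, otherwise to a primitive root of unity of its
  order \<open>N\<close>, which is non-real because \<open>N > 2\<close>.\<close>
lemma admissible_nonreal_exists:
  assumes g: "(g::'a::ab_group_add) + g \<noteq> 0"
  shows "\<exists>z. admissible {(0, 1)} g z \<and> Im z \<noteq> 0"
proof (cases "\<exists>n>0. natmul n g = 0")
  case False
  have "admissible {(0, 1)} g \<i>" unfolding admissible_def
  proof (intro conjI allI impI)
    fix n c assume "(natmul n g, c) \<in> {(0::'a, 1::complex)}"
    hence "natmul n g = 0" "c = 1" by auto
    with False show "c = \<i> ^ n" by (metis gr0I power_0)
  qed simp
  thus ?thesis by (intro exI[of _ \<i>]) simp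
next
  case True
  define N where "N = (LEAST n. n > 0 \<and> natmul n g = 0)"
  have N: "N > 0 \<and> natmul N g = 0"
    unfolding N_def by (rule LeastI_ex) (use True in blast)
  have "N \<noteq> 1" "N \<noteq> 2" using N g by (auto simp: numeral_2_eq_2)
  hence N3: "N > 2" using N by linarith
  define z where "z = cis (2 * pi / N)"
  have "admissible {(0, 1)} g z" unfolding admissible_def
  proof (intro conjI allI impI)
    show "cmod z = 1" by (simp add: z_def)
    fix n c assume "(natmul n g, c) \<in> {(0::'a, 1::complex)}"
    hence n0: "natmul n g = 0" "c = 1" by auto
    have "natmul (n mod N) g = 0" using natmul_mod_div[of n g N] n0 N by simp
    have "n mod N = 0"
    proof (rule ccontr)
      assume "n mod N \<noteq> 0"
      hence "0 < n mod N \<and> natmul (n mod N) g = 0" using \<open>natmul (n mod N) g = 0\<close> by auto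
      hence "N \<le> n mod N" unfolding N_def by (rule Least_le)
      thus False using N mod_less_divisor[of N n] by linarith
    qed
    hence nN: "n = N * (n div N)" using mult_div_mod_eq[of N n] by simp
    have "real n * (2 * pi / N) = 2 * pi * real (n div N)"
      using N by (subst nN) (simp add: field_simps)
    hence "z ^ n = cis (2 * pi * real (n div N))" by (simp add: z_def DeMoivre)
    also have "\<dots> = 1" by (rule cis_multiple_2pi) simp
    finally show "c = z ^ n" using n0 by simp
  qed
  moreover have "Im z \<noteq> 0"
  proof -
    have "2 * pi / N < pi" using N3 by (simp add: field_simps)
    hence "sin (2 * pi / N) > 0" using N by (intro sin_gt_zero) simp_all
    thus ?thesis by (simp add: z_def)
  qed
  ultimately show ?thesis by blast
qed

lemma circle_char_nonreal_exists:
  assumes "g + g \<noteq> 0"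
  obtains \<psi> :: "'a::ab_group_add \<Rightarrow> complex"
  where "\<And>x. cmod (\<psi> x) = 1" "\<And>x y. \<psi> (x + y) = \<psi> x * \<psi> y" "Im (\<psi> g) \<noteq> 0"
proof -
  obtain z where z: "admissible {(0, 1)} g z" "Im z \<noteq> 0"
    using admissible_nonreal_exists[OF assms] by blast
  note R = partial_char_adjoin[OF partial_char_single z(1)]
  obtain \<psi> :: "'a \<Rightarrow> complex" where \<psi>: "\<And>x. cmod (\<psi> x) = 1" "\<And>x y. \<psi> (x + y) = \<psi> x * \<psi> y"
    "\<And>x a. (x, a) \<in> adjoin {(0, 1)} g z \<Longrightarrow> \<psi> x = a"
    using partial_char_extends[OF R(1)] by blast
  show thesis
    by (rule that[OF \<psi>(1,2)]) (simp add: \<psi>(3)[OF R(3)] z(2))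
qed

section \<open>Embedding the complex numbers into a slice\<close>

definition cembed :: "quat \<Rightarrow> complex \<Rightarrow> quat" where
  "cembed J z = Quat (Re z) (Im z * qim_i J) (Im z * qim_j J) (Im z * qim_k J)"

lemma cembed_mult:
  assumes "(qim_i J)\<^sup>2 + (qim_j J)\<^sup>2 + (qim_k J)\<^sup>2 = 1"
  shows "cembed J (z * w) = cembed J z * cembed J w"
proof -
  have "Im z * Im w = Im z * Im w * ((qim_i J)\<^sup>2 + (qim_j J)\<^sup>2 + (qim_k J)\<^sup>2)" using assms by simp
  thus ?thesis by (intro quat.expand) (simp add: cembed_def algebra_simps power2_eq_square)
qed

lemma qnormsq_cembed:
  assumes "(qim_i J)\<^sup>2 + (qim_j J)\<^sup>2 + (qim_k J)\<^sup>2 = 1"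
  shows "qnormsq (cembed J z) = (cmod z)\<^sup>2"
proof -
  have "(Im z)\<^sup>2 = (Im z)\<^sup>2 * ((qim_i J)\<^sup>2 + (qim_j J)\<^sup>2 + (qim_k J)\<^sup>2)" using assms by simp
  thus ?thesis by (simp add: qnormsq_def cembed_def cmod_power2 power_mult_distrib algebra_simps)
qed

lemma imag_unit_outside_slice_exists:
  assumes "imag_unit I"
  shows "\<exists>J. (qim_i J)\<^sup>2 + (qim_j J)\<^sup>2 + (qim_k J)\<^sup>2 = 1 \<and> (\<forall>z. cembed J z \<in> slice I \<longrightarrow> Im z = 0)"
proof -
  have I1: "(qim_i I)\<^sup>2 + (qim_j I)\<^sup>2 + (qim_k I)\<^sup>2 = 1"
    using assms by (auto simp: imag_unit_def qnorm_def)
  have parallel: "\<exists>b. Im z * qim_i J = b * qim_i I \<and> Im z * qim_j J = b * qim_j I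
      \<and> Im z * qim_k J = b * qim_k I" if in_slice: "cembed J z \<in> slice I" for J z
  proof -
    obtain a b where E: "cembed J z = qadd (qof_real a) (qmul I (qof_real b))"
      using in_slice unfolding slice_def by blast
    show ?thesis
      using arg_cong[OF E, of qim_i] arg_cong[OF E, of qim_j] arg_cong[OF E, of qim_k]
      by (intro exI[of _ b]) (simp add: cembed_def qadd_eq_plus qmul_eq_times qof_real_def mult.commute)
  qed
  show ?thesis
  proof (cases "qim_j I = 0 \<and> qim_k I = 0")
    case True
    hence "qim_i I \<noteq> 0" using I1 by auto
    show ?thesis
      by (rule exI[of _ "Quat 0 0 1 0"]) (use parallel True \<open>qim_i I \<noteq> 0\<close> in force)
  next
    case False
    show ?thesis
      by (rule exI[of _ "Quat 0 1 0 0"]) (use parallel False in force)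
  qed
qed

lemma Gdelta_nonreal_outside_Ghat_exists:
  assumes "imag_unit I" "g + g \<noteq> 0"
  shows "\<exists>\<chi>. \<chi> \<in> (Gdelta :: ('a::ab_group_add \<Rightarrow> quat) set) \<and> \<chi> \<notin> Ghat I \<and> \<not> qis_real (\<chi> g)"
proof -
  obtain \<psi> :: "'a \<Rightarrow> complex"
    where \<psi>: "\<And>x. cmod (\<psi> x) = 1" "\<And>x y. \<psi> (x + y) = \<psi> x * \<psi> y" "Im (\<psi> g) \<noteq> 0"
    using circle_char_nonreal_exists[OF assms(2)] by blast
  obtain J where J: "(qim_i J)\<^sup>2 + (qim_j J)\<^sup>2 + (qim_k J)\<^sup>2 = 1"
    "\<And>z. cembed J z \<in> slice I \<Longrightarrow> Im z = 0"
    using imag_unit_outside_slice_exists[OF assms(1)] by blast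
  define \<chi> where "\<chi> x = cembed J (\<psi> x)" for x
  have "\<chi> \<in> Gdelta"
    unfolding Gdelta_def qsphere_def
    by (auto simp: \<chi>_def qnorm_eq_1_iff qnormsq_cembed[OF J(1)] \<psi> qmul_eq_times cembed_mult[OF J(1)])
  moreover have "\<chi> \<notin> Ghat I" using J(2) \<psi>(3) by (auto simp: Ghat_def \<chi>_def)
  moreover have "\<not> qis_real (\<chi> g)"
    using J(1) \<psi>(3) by (auto simp: qis_real_iff \<chi>_def cembed_def power2_eq_square)
  ultimately show ?thesis by blast
qed

theorem mainTheorem14:
  fixes I :: quat
  assumes "imag_unit I"
  shows "((Ghat I :: ('a::ab_group_add \<Rightarrow> quat) set) = Gdelta
            \<longleftrightarrow> (\<forall>\<phi>\<in>(PH_star :: ('a \<Rightarrow> quat) set). \<forall>g. qis_real (\<phi> g)))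
       \<and> ((\<forall>\<phi>\<in>(PH_star :: ('a \<Rightarrow> quat) set). \<forall>g. qis_real (\<phi> g))
            \<longleftrightarrow> (\<forall>g::'a. g + g = 0))"
proof -
  have iii_ii: "\<forall>\<phi>\<in>(PH_star :: ('a \<Rightarrow> quat) set). \<forall>g. qis_real (\<phi> g)" if "\<forall>g::'a. g + g = 0"
    using that pos_def_H_real_at_involution by (auto simp: PH_star_def)
  have ii_iii: "\<forall>g::'a. g + g = 0" if "\<forall>\<phi>\<in>(PH_star :: ('a \<Rightarrow> quat) set). \<forall>g. qis_real (\<phi> g)"
    using that Gdelta_nonreal_outside_Ghat_exists[OF assms] Gdelta_subset_PH_star by blast
  have i_iii: "\<forall>g::'a. g + g = 0" if "(Ghat I :: ('a \<Rightarrow> quat) set) = Gdelta"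
    using that Gdelta_nonreal_outside_Ghat_exists[OF assms] by blast
  show ?thesis
    using iii_ii ii_iii i_iii Ghat_eq_Gdelta_if_exponent_two by blast
qed

end
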